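(* Let $b \geq 2$ be an integer and let $a_1a_2a_3\ldots$ be an infinite de Bruijn word over the alphabet $\{0,1,\ldots,b-1\}$. Let $\alpha = 0.a_1a_2a_3\ldots$ be the real number with base-$b$ digits $a_1,a_2,\ldots$, i.e. $\alpha=\sum_{k\ge1}a_k b^{-k}$. Then the sequence $(\{b^n \alpha\})_{n \in \mathbb{N}}$ does not have Poissonian pair correlations.
   Context: $\{x\}$ denotes the fractional part of $x$ and $\|x\|$ the distance from $x$ to the nearest integer. A sequence $(x_n)_{n\in\mathbb{N}}$ in $[0,1)$ has Poissonian pair correlations if for every $s \geq 0$, $F_N(s) := \frac{1}{N}\#\{1 \leq l \neq m \leq N : \|x_l - x_m\| \leq s/N\} \to 2s$ as $N\to\infty$. A (non-cyclic) de Bruijn word of order $m$ over an alphabet $A$ is a word of length $|A|^m+m-1$ in which every word of length $m$ over $A$ occurs (as a factor of consecutive letters) exactly once. An infinite de Bruijn word $w=a_1a_2\ldots$ over an alphabet $A$ with at least three symbols is an infinite word such that for every $m$, $a_1\ldots a_{|A|^m+m-1}$ is a de Bruijn word of order $m$; if the alphabet has two symbols, it is an infinite word such that for every odd $m$, $a_1\ldots a_{|A|^m+m-1}$ is a de Bruijn word of order $m$. *)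

theory Defs
  imports "HOL-Analysis.Analysis"
begin

definition dist_int :: "real \<Rightarrow> real" where
  "dist_int x = \<bar>x - of_int (round x)\<bar>"

definition pair_corr :: "(nat \<Rightarrow> real) \<Rightarrow> nat \<Rightarrow> real \<Rightarrow> real" where
  "pair_corr x N s = real (card {(l, m). l \<in> {1..N} \<and> m \<in> {1..N} \<and> l \<noteq> m \<and>
       dist_int (x l - x m) \<le> s / real N}) / real N"

definition poissonian_pair_correlations :: "(nat \<Rightarrow> real) \<Rightarrow> bool" where
  "poissonian_pair_correlations x \<longleftrightarrow>
     (\<forall>s::real. s \<ge> 0 \<longrightarrow> ((\<lambda>N. pair_corr x N s) \<longlonglongrightarrow> 2 * s))"

text \<open>The word a_1 a_2 ... (letters a k for k >= 1) has prefix of length b^m+m-1 being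
  a de Bruijn word of order m over {0..b-1}: every word w of length m over the alphabet
  occurs exactly once as a factor, i.e. at exactly one start position i in {1..b^m}.\<close>
definition debruijn_prefix :: "nat \<Rightarrow> (nat \<Rightarrow> nat) \<Rightarrow> nat \<Rightarrow> bool" where
  "debruijn_prefix b a m \<longleftrightarrow>
     (\<forall>w. length w = m \<and> set w \<subseteq> {..<b} \<longrightarrow>
        (\<exists>!i. i \<in> {1..b ^ m} \<and> (\<forall>j<m. a (i + j) = w ! j)))"

definition infinite_debruijn :: "nat \<Rightarrow> (nat \<Rightarrow> nat) \<Rightarrow> bool" where
  "infinite_debruijn b a \<longleftrightarrow>
     (\<forall>k\<ge>1. a k < b) \<and>
     (if b \<ge> 3 then (\<forall>m. debruijn_prefix b a m)
      else (\<forall>m. odd m \<longrightarrow> debruijn_prefix b a m))"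

end

theory Submission
  imports Defs
begin

(* The n-th point {b^n \<alpha>} is the tail 0.a_(n+1) a_(n+2) ... of the expansion, which is
   less than 1 because zeros occur arbitrarily late. For N = b^m - 1 with m odd, the de Bruijn
   property makes the first m digits of the points 1, ..., N pairwise distinct, so the N points
   lie in distinct cells [k/(N+1), (k+1)/(N+1)). For such points, two of them at distance at most
   s/N < 1/(N+1) lie in neighbouring cells (or in the first and the last cell), hence N F_N(s) is
   at most 2 #{normalised gaps between neighbouring cells that are <= s} + 2. These gaps are at
   most 2 and add up to more than N - 2, which is incompatible with F_N(1/2) and F_N(7/8) being
   close to 1 and 7/4 once N >= 28. *)

lemma sums_maximal_digits:
  fixes c :: real
  assumes "c > 1"
  shows "(\<lambda>k. (c - 1) / c ^ Suc k) sums 1"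
proof -
  have "(\<lambda>k. (1 / c) ^ k) sums (1 / (1 - 1 / c))"
    by (rule geometric_sums) (use assms in simp)
  then have "(\<lambda>k. (c - 1) / c * (1 / c) ^ k) sums ((c - 1) / c * (1 / (1 - 1 / c)))"
    by (rule sums_mult)
  moreover have "(c - 1) / c * (1 / (1 - 1 / c)) = 1"
    using assms by (simp add: field_simps)
  ultimately show ?thesis
    using assms by (simp add: power_divide)
qed

lemma floor_power_div:
  fixes b :: nat and t :: real
  assumes "b > 0" "j \<le> m"
  shows "\<lfloor>real b ^ j * t\<rfloor> = \<lfloor>real b ^ m * t\<rfloor> div int b ^ (m - j)"
proof -
  have "real b ^ m = real b ^ j * real b ^ (m - j)"
    using assms(2) by (simp flip: power_add)
  then have "real b ^ j * t = real b ^ m * t / real_of_int (int b ^ (m - j))"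
    using assms(1) by simp
  then show ?thesis
    using floor_divide_real_eq_div[of "int b ^ (m - j)" "real b ^ m * t"] by simp
qed

definition digit_tail :: "nat \<Rightarrow> (nat \<Rightarrow> nat) \<Rightarrow> nat \<Rightarrow> real" where
  "digit_tail b a l = (\<Sum>k. real (a (l + Suc k)) / real b ^ Suc k)"

locale base_digits =
  fixes b :: nat and a :: "nat \<Rightarrow> nat"
  assumes base_ge_2: "b \<ge> 2" and digit_less: "\<And>k. k \<ge> 1 \<Longrightarrow> a k < b"
begin

lemma digit_term_le: "real (a (l + Suc k)) / real b ^ Suc k \<le> (real b - 1) / real b ^ Suc k"
  using digit_less[of "l + Suc k"] by (intro divide_right_mono) auto

lemma summable_digits: "summable (\<lambda>k. real (a (l + Suc k)) / real b ^ Suc k)"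
  by (rule summable_comparison_test'[OF sums_summable[OF sums_maximal_digits]])
     (use base_ge_2 digit_term_le in auto)

lemma digit_tail_nonneg: "0 \<le> digit_tail b a l"
  unfolding digit_tail_def by (rule suminf_nonneg[OF summable_digits]) simp

lemma digit_tail_less_one:
  assumes "a (l + Suc k) < b - 1"
  shows "digit_tail b a l < 1"
proof -
  let ?f = "\<lambda>k. real (a (l + Suc k)) / real b ^ Suc k"
  let ?g = "\<lambda>k. (real b - 1) / real b ^ Suc k"
  have g: "?g sums 1"
    using base_ge_2 by (intro sums_maximal_digits) simp
  have "0 < (\<Sum>k. ?g k - ?f k)"
  proof (rule suminf_pos2)
    show "summable (\<lambda>k. ?g k - ?f k)"
      by (intro summable_diff sums_summable[OF g] summable_digits)
    show "0 \<le> ?g n - ?f n" for n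
      using digit_term_le by simp
    show "0 < ?g k - ?f k"
      using assms base_ge_2 by (simp add: divide_strict_right_mono)
  qed
  also have "(\<Sum>k. ?g k - ?f k) = 1 - digit_tail b a l"
    using suminf_diff[OF sums_summable[OF g] summable_digits] sums_unique[OF g]
    by (simp add: digit_tail_def)
  finally show ?thesis by simp
qed

lemma digit_tail_Suc: "real b * digit_tail b a l = real (a (Suc l)) + digit_tail b a (Suc l)"
proof -
  have "(\<Sum>k. real (a (l + Suc (Suc k))) / real b ^ Suc (Suc k)) =
        digit_tail b a l - real (a (Suc l)) / real b"
    using suminf_split_head[OF summable_digits[of l]] by (simp add: digit_tail_def)
  moreover have "(\<Sum>k. real (a (l + Suc (Suc k))) / real b ^ Suc (Suc k)) = digit_tail b a (Suc l) / real b"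
    unfolding digit_tail_def by (subst suminf_divide[OF summable_digits, symmetric]) (simp add: ac_simps)
  ultimately show ?thesis
    using base_ge_2 by (simp add: field_simps)
qed

lemma digit_tail_shift: "\<exists>c::int. real b ^ j * digit_tail b a l = of_int c + digit_tail b a (l + j)"
proof (induction j)
  case 0
  show ?case by (intro exI[of _ 0]) simp
next
  case (Suc j)
  then obtain c :: int where c: "real b ^ j * digit_tail b a l = of_int c + digit_tail b a (l + j)"
    by blast
  have "real b ^ Suc j * digit_tail b a l = real b * of_int c + real b * digit_tail b a (l + j)"
    using c by (simp add: algebra_simps)
  also have "\<dots> = of_int (int b * c + int (a (Suc (l + j)))) + digit_tail b a (l + Suc j)"
    using digit_tail_Suc[of "l + j"] by simp
  finally show ?case by blast
qed

context
  assumes tails_less_one: "\<And>l. digit_tail b a l < 1"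
begin

lemma frac_power_digit_tail: "frac (real b ^ n * digit_tail b a 0) = digit_tail b a n"
proof -
  obtain c :: int where c: "real b ^ n * digit_tail b a 0 = of_int c + digit_tail b a n"
    using digit_tail_shift[of n 0] by auto
  then have "\<lfloor>real b ^ n * digit_tail b a 0\<rfloor> = c"
    using tails_less_one digit_tail_nonneg by (intro floor_unique) auto
  then show ?thesis
    using c by (simp add: frac_def)
qed

lemma floor_power_digit_tail_mod:
  "\<lfloor>real b ^ Suc j * digit_tail b a l\<rfloor> mod int b = int (a (l + Suc j))"
proof -
  obtain c :: int where c: "real b ^ j * digit_tail b a l = of_int c + digit_tail b a (l + j)"
    using digit_tail_shift by blast
  have "real b ^ Suc j * digit_tail b a l
      = of_int (int b * c + int (a (Suc (l + j)))) + digit_tail b a (Suc (l + j))"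
    using c digit_tail_Suc[of "l + j"] by (simp add: algebra_simps)
  then have "\<lfloor>real b ^ Suc j * digit_tail b a l\<rfloor> = int b * c + int (a (Suc (l + j)))"
    using tails_less_one digit_tail_nonneg by (intro floor_unique) auto
  moreover have "a (Suc (l + j)) < b"
    using digit_less by simp
  ultimately show ?thesis by simp
qed

lemma floor_power_digit_tail_digit:
  assumes "j < m"
  shows "\<lfloor>real b ^ m * digit_tail b a l\<rfloor> div int b ^ (m - Suc j) mod int b = int (a (l + Suc j))"
  using floor_power_digit_tail_mod[of j l] floor_power_div[of b "Suc j" m] base_ge_2 assms by simp

end

end

lemma dist_int_lower_bound:
  assumes "\<bar>z\<bar> < 1"
  shows "\<bar>z\<bar> \<le> dist_int z \<or> 1 - \<bar>z\<bar> \<le> dist_int z"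
proof -
  consider "round z = 0" | "round z \<ge> 1" | "round z \<le> -1" by linarith
  then show ?thesis
  proof cases
    case 2
    then have "real_of_int (round z) \<ge> 1" by simp
    then show ?thesis using assms by (simp add: dist_int_def) linarith
  next
    case 3
    then have "real_of_int (round z) \<le> -1" by simp
    then show ?thesis using assms by (simp add: dist_int_def) linarith
  qed (simp add: dist_int_def)
qed

lemma sum_le_threshold_counts:
  fixes g :: "'a \<Rightarrow> real"
  assumes "finite A" "u \<le> t" "t \<le> c" "\<And>k. k \<in> A \<Longrightarrow> g k \<le> c"
  shows "(\<Sum>k\<in>A. g k) \<le> c * card A - (c - t) * card {k\<in>A. g k \<le> t} - (t - u) * card {k\<in>A. g k \<le> u}"
proof -
  let ?ind = "\<lambda>s k. if g k \<le> s then 1 else 0 :: real"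
  have count: "(\<Sum>k\<in>A. ?ind s k) = card {k\<in>A. g k \<le> s}" for s
    using assms(1) by (simp add: sum.If_cases Int_def conj_commute)
  have "(\<Sum>k\<in>A. g k) \<le> (\<Sum>k\<in>A. c - (c - t) * ?ind t k - (t - u) * ?ind u k)"
    using assms(2-4) by (intro sum_mono) auto
  also have "\<dots> = c * card A - (c - t) * card {k\<in>A. g k \<le> t} - (t - u) * card {k\<in>A. g k \<le> u}"
    by (simp add: sum_subtractf sum_distrib_left[symmetric] count)
  finally show ?thesis .
qed

locale cell_separated =
  fixes x :: "nat \<Rightarrow> real" and N :: nat
  assumes points_in_unit: "\<And>l. l \<in> {1..N} \<Longrightarrow> 0 \<le> x l \<and> x l < 1"
    and cells_inj: "inj_on (\<lambda>l. nat \<lfloor>real (Suc N) * x l\<rfloor>) {1..N}"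
begin

definition cell :: "nat \<Rightarrow> nat" where
  "cell l = nat \<lfloor>real (Suc N) * x l\<rfloor>"

lemma inj_on_cell: "inj_on cell {1..N}"
  using cells_inj by (simp add: cell_def[abs_def])

lemma cell_bounds:
  assumes "l \<in> {1..N}"
  shows "real (cell l) \<le> real (Suc N) * x l" "real (Suc N) * x l < real (cell l) + 1"
    and "cell l \<le> N"
proof -
  have x: "0 \<le> x l" "x l < 1"
    using points_in_unit[OF assms] by auto
  then have "real (cell l) = of_int \<lfloor>real (Suc N) * x l\<rfloor>"
    by (simp add: cell_def)
  then show "real (cell l) \<le> real (Suc N) * x l" "real (Suc N) * x l < real (cell l) + 1"
    by linarith+
  have "real (Suc N) * x l < real (Suc N)"
    using x by simp
  then show "cell l \<le> N"
    unfolding cell_def by linarith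
qed

(* An empty cell k is represented by its left endpoint, so that consecutive values of filled
   are less than 2/(N+1) apart. *)
definition filled :: "nat \<Rightarrow> real" where
  "filled k = (if k \<in> cell ` {1..N} then x (the_inv_into {1..N} cell k) else real k / real (Suc N))"

lemma filled_cell:
  assumes "l \<in> {1..N}"
  shows "filled (cell l) = x l"
  unfolding filled_def using assms the_inv_into_f_f[OF inj_on_cell assms] by auto

lemma filled_bounds:
  assumes "k \<le> N"
  shows "real k / real (Suc N) \<le> filled k \<and> filled k < (real k + 1) / real (Suc N)"
proof (cases "k \<in> cell ` {1..N}")
  case True
  then obtain l where l: "l \<in> {1..N}" and k: "k = cell l" by blast
  show ?thesis
    using cell_bounds(1,2)[OF l] filled_cell[OF l] k
    by (simp add: pos_divide_le_eq pos_less_divide_eq mult.commute del: of_nat_Suc)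
next
  case False
  then show ?thesis
    by (simp add: filled_def divide_strict_right_mono)
qed

definition gap :: "nat \<Rightarrow> real" where
  "gap k = real N * (filled (Suc k) - filled k)"

lemma sum_gaps_gt: "(\<Sum>k<N. gap k) > real N - 2"
proof -
  have "filled N - filled 0 > (real N - 1) / real (Suc N)"
    using filled_bounds[of N] filled_bounds[of 0] by (simp add: diff_divide_distrib)
  then have "real N * (filled N - filled 0) \<ge> real N * ((real N - 1) / real (Suc N))"
    by (intro mult_left_mono) auto
  moreover have "(\<Sum>k<N. gap k) = real N * (filled N - filled 0)"
    by (simp add: gap_def sum_distrib_left[symmetric] sum_lessThan_telescope)
  moreover have "real N * ((real N - 1) / real (Suc N)) > real N - 2"
    by (simp add: field_simps)
  ultimately show ?thesis by linarith
qed

lemma gap_le_two: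
  assumes "k < N"
  shows "gap k \<le> 2"
proof -
  have "(real (Suc k) + 1) / real (Suc N) - real k / real (Suc N) = 2 / real (Suc N)"
    by (simp add: diff_divide_distrib[symmetric])
  then have "filled (Suc k) - filled k < 2 / real (Suc N)"
    using filled_bounds[of "Suc k"] filled_bounds[of k] assms by linarith
  then have "gap k \<le> real N * (2 / real (Suc N))"
    unfolding gap_def by (intro mult_left_mono) auto
  also have "\<dots> \<le> 2"
    by (simp add: field_simps)
  finally show ?thesis .
qed

definition close_pairs :: "real \<Rightarrow> (nat \<times> nat) set" where
  "close_pairs s = {(l, m). l \<in> {1..N} \<and> m \<in> {1..N} \<and> l \<noteq> m \<and>
       dist_int (x l - x m) \<le> s / real N}"

definition small_gaps :: "real \<Rightarrow> nat set" where
  "small_gaps s = {k \<in> {..<N}. gap k \<le> s}"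

lemma adjacent_cells_small_gap:
  assumes l: "l \<in> {1..N}" and m: "m \<in> {1..N}" and adj: "cell m = Suc (cell l)"
    and close: "\<bar>x l - x m\<bar> \<le> s / real N"
  shows "cell l \<in> small_gaps s"
proof -
  have "real (cell m) = real (cell l) + 1"
    using adj by simp
  then have "real (Suc N) * x l < real (Suc N) * x m"
    using cell_bounds(1,2)[OF l] cell_bounds(1,2)[OF m] by linarith
  then have "x l \<le> x m"
    by (simp del: of_nat_Suc)
  have "gap (cell l) = real N * (x m - x l)"
    using filled_cell[OF l] filled_cell[OF m] adj by (simp add: gap_def)
  also have "\<dots> \<le> real N * (s / real N)"
    using \<open>x l \<le> x m\<close> close by (intro mult_left_mono) auto
  also have "\<dots> = s"
    using l by simp
  finally have "gap (cell l) \<le> s" .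
  moreover have "cell l < N"
    using cell_bounds(3)[OF m] adj by simp
  ultimately show ?thesis
    by (simp add: small_gaps_def)
qed

lemma near_points_adjacent_cells:
  assumes l: "l \<in> {1..N}" and m: "m \<in> {1..N}" and "cell l < cell m"
    and near: "\<bar>x l - x m\<bar> < 1 / real (Suc N)"
  shows "cell m = Suc (cell l)"
proof -
  have "\<bar>real (Suc N) * x l - real (Suc N) * x m\<bar> = real (Suc N) * \<bar>x l - x m\<bar>"
    by (simp add: right_diff_distrib[symmetric] abs_mult del: of_nat_Suc)
  also have "\<dots> < 1"
    using near by (simp add: pos_less_divide_eq mult.commute del: of_nat_Suc)
  finally have "\<bar>real (Suc N) * x l - real (Suc N) * x m\<bar> < 1" .
  then have "real (cell m) < real (cell l) + 2"
    using cell_bounds[OF l] cell_bounds[OF m] by linarith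
  then show ?thesis
    using assms(3) by linarith
qed

lemma far_points_extreme_cells:
  assumes l: "l \<in> {1..N}" and m: "m \<in> {1..N}" and "x m \<le> x l"
    and far: "1 - (x l - x m) < 1 / real (Suc N)"
  shows "cell l = N" "cell m = 0"
proof -
  have far': "real (Suc N) * (1 - (x l - x m)) < 1"
    using far by (simp add: pos_less_divide_eq mult.commute del: of_nat_Suc)
  have "0 \<le> x m" "x l < 1"
    using points_in_unit l m by auto
  then have "real (Suc N) * (1 - x l) \<le> real (Suc N) * (1 - (x l - x m))"
    and "real (Suc N) * x m \<le> real (Suc N) * (1 - (x l - x m))"
    by (intro mult_left_mono; simp)+
  then have "real (Suc N) * x l > real N" "real (Suc N) * x m < 1"
    using far' by (simp_all add: algebra_simps)
  then show "cell l = N" "cell m = 0"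
    using cell_bounds[OF l] cell_bounds[OF m] by linarith+
qed

lemma close_pair_cells:
  assumes lm: "(l, m) \<in> close_pairs s" and s: "s * real (Suc N) < real N"
  shows "(cell l, cell m) \<in> (\<lambda>k. (k, Suc k)) ` small_gaps s \<union> (\<lambda>k. (Suc k, k)) ` small_gaps s
           \<union> {(N, 0), (0, N)}"
proof -
  have l: "l \<in> {1..N}" and m: "m \<in> {1..N}" and "l \<noteq> m"
    and close: "dist_int (x l - x m) \<le> s / real N"
    using lm by (auto simp: close_pairs_def)
  then have "cell l \<noteq> cell m"
    using inj_on_cell by (auto dest: inj_onD)
  have sN: "s / real N < 1 / real (Suc N)"
    using s l by (simp add: field_simps del: of_nat_Suc)
  have "\<bar>x l - x m\<bar> < 1"
    using points_in_unit[OF l] points_in_unit[OF m] by linarith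
  then consider "\<bar>x l - x m\<bar> \<le> s / real N" | "1 - \<bar>x l - x m\<bar> \<le> s / real N"
    using dist_int_lower_bound close by fastforce
  then show ?thesis
  proof cases
    case 1
    show ?thesis
    proof (cases "cell l < cell m")
      case True
      then have "cell m = Suc (cell l)"
        using near_points_adjacent_cells[OF l m] 1 sN by simp
      then show ?thesis
        using adjacent_cells_small_gap[OF l m] 1 by auto
    next
      case False
      then have "cell l = Suc (cell m)"
        using near_points_adjacent_cells[OF m l] 1 sN \<open>cell l \<noteq> cell m\<close> by (simp add: abs_minus_commute)
      then show ?thesis
        using adjacent_cells_small_gap[OF m l] 1 by (auto simp: abs_minus_commute)
    qed
  next
    case 2
    show ?thesis
    proof (cases "x m \<le> x l")
      case True
      then show ?thesis
        using far_points_extreme_cells[OF l m] 2 sN by simp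
    next
      case False
      then show ?thesis
        using far_points_extreme_cells[OF m l] 2 sN by simp
    qed
  qed
qed

lemma card_close_pairs_le:
  assumes "s * real (Suc N) < real N"
  shows "card (close_pairs s) \<le> 2 * card (small_gaps s) + 2"
proof -
  let ?A = "(\<lambda>k. (k, Suc k)) ` small_gaps s" and ?B = "(\<lambda>k. (Suc k, k)) ` small_gaps s"
  have fin: "finite (small_gaps s)"
    by (simp add: small_gaps_def)
  have "close_pairs s \<subseteq> {1..N} \<times> {1..N}"
    by (auto simp: close_pairs_def)
  then have "inj_on (map_prod cell cell) (close_pairs s)"
    using map_prod_inj_on[OF inj_on_cell inj_on_cell] by (rule inj_on_subset[rotated])
  then have "card (close_pairs s) = card (map_prod cell cell ` close_pairs s)"
    by (simp add: card_image)
  also have "\<dots> \<le> card (?A \<union> ?B \<union> {(N, 0), (0, N)})"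
  proof (rule card_mono)
    show "finite (?A \<union> ?B \<union> {(N, 0), (0, N)})"
      using fin by simp
    show "map_prod cell cell ` close_pairs s \<subseteq> ?A \<union> ?B \<union> {(N, 0), (0, N)}"
    proof
      fix p
      assume "p \<in> map_prod cell cell ` close_pairs s"
      then obtain l m where "(l, m) \<in> close_pairs s" "p = (cell l, cell m)"
        by auto
      then show "p \<in> ?A \<union> ?B \<union> {(N, 0), (0, N)}"
        using close_pair_cells[OF _ assms] by simp
    qed
  qed
  also have "\<dots> \<le> card (?A \<union> ?B) + card {(N, 0), (0, N)}"
    by (rule card_Un_le)
  also have "\<dots> \<le> card ?A + card ?B + 2"
    by (intro add_mono card_Un_le) (simp add: card_insert_if)
  also have "\<dots> \<le> card (small_gaps s) + card (small_gaps s) + 2"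
    by (intro add_mono card_image_le fin) simp
  finally show ?thesis by simp
qed

lemma pair_corr_eq: "pair_corr x N s = real (card (close_pairs s)) / real N"
  by (simp add: pair_corr_def close_pairs_def)

lemma pair_corr_not_both_large:
  assumes "N \<ge> 28"
  shows "pair_corr x N (1/2) < 9/10 \<or> pair_corr x N (7/8) < 17/10"
proof (rule ccontr)
  have close_le: "real (card (close_pairs s)) \<le> 2 * real (card (small_gaps s)) + 2"
    if "s \<le> 7/8" for s
  proof -
    have "s * real (Suc N) \<le> 7/8 * real (Suc N)"
      using that by (rule mult_right_mono) simp
    then have "s * real (Suc N) < real N"
      using assms by simp
    then show ?thesis
      using card_close_pairs_le of_nat_mono[where 'a = real] by fastforce
  qed
  assume "\<not> ?thesis"
  then have "real (card (close_pairs (1/2))) \<ge> 9/10 * real N"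
    and "real (card (close_pairs (7/8))) \<ge> 17/10 * real N"
    using assms by (simp_all add: pair_corr_eq field_simps)
  moreover note close_le[of "1/2"] close_le[of "7/8"]
  moreover have "(\<Sum>k<N. gap k) \<le> 2 * real N - (2 - 7/8) * real (card (small_gaps (7/8)))
      - (7/8 - 1/2) * real (card (small_gaps (1/2)))"
    using sum_le_threshold_counts[of "{..<N}" "1/2" "7/8" 2 gap] gap_le_two
    by (simp add: small_gaps_def)
  \<comment> \<open>These bounds give \<open>\<Sum>k<N. gap k \<le> 7N/8 + 3/2\<close>, which contradicts \<open>sum_gaps_gt\<close> exactly when \<open>N \<ge> 28\<close>.\<close>
  ultimately show False
    using sum_gaps_gt assms by simp
qed

end

lemma debruijn_prefix_factor_inj:
  assumes db: "debruijn_prefix b a m" and digits: "\<And>k. k \<ge> 1 \<Longrightarrow> a k < b"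
  shows "inj_on (\<lambda>l. map (\<lambda>j. a (l + Suc j)) [0..<m]) {..<b ^ m}"
proof (rule inj_onI)
  fix l l'
  assume l: "l \<in> {..<b ^ m}" and l': "l' \<in> {..<b ^ m}"
    and eq: "map (\<lambda>j. a (l + Suc j)) [0..<m] = map (\<lambda>j. a (l' + Suc j)) [0..<m]"
  define w where "w = map (\<lambda>j. a (l + Suc j)) [0..<m]"
  have "length w = m \<and> set w \<subseteq> {..<b}"
    using digits by (auto simp: w_def)
  then have "\<exists>!i. i \<in> {1..b ^ m} \<and> (\<forall>j<m. a (i + j) = w ! j)"
    using db by (simp add: debruijn_prefix_def)
  moreover have "Suc l \<in> {1..b ^ m} \<and> (\<forall>j<m. a (Suc l + j) = w ! j)"
    using l by (simp add: w_def)
  moreover have "Suc l' \<in> {1..b ^ m} \<and> (\<forall>j<m. a (Suc l' + j) = w ! j)"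
    using l' eq by (simp add: w_def map_eq_conv)
  ultimately have "Suc l = Suc l'"
    by blast
  then show "l = l'"
    by simp
qed

lemma debruijn_prefix_zero_digit:
  assumes "debruijn_prefix b a m" "l < m" "b > 0"
  shows "\<exists>k. a (l + Suc k) = 0"
proof -
  have "length (replicate m 0) = m \<and> set (replicate m 0) \<subseteq> {..<b}"
    using assms(3) by auto
  then obtain i where i: "i \<in> {1..b ^ m}" and zeros: "\<forall>j<m. a (i + j) = replicate m 0 ! j"
    using assms(1) unfolding debruijn_prefix_def by blast
  have "a (i + (m - 1)) = 0"
    using zeros[rule_format, of "m - 1"] assms(2) by simp
  moreover have "i + (m - 1) = l + Suc (i + m - 2 - l)"
    using i assms(2) by auto
  ultimately have "a (l + Suc (i + m - 2 - l)) = 0"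
    by simp
  then show ?thesis ..
qed

lemma infinite_debruijn_odd:
  assumes "infinite_debruijn b a" "odd m"
  shows "debruijn_prefix b a m"
  using assms by (auto simp: infinite_debruijn_def split: if_splits)

lemma (in base_digits) debruijn_tails_cell_separated:
  assumes tails: "\<And>l. digit_tail b a l < 1" and db: "debruijn_prefix b a m"
  shows "cell_separated (digit_tail b a) (b ^ m - 1)"
proof
  have bm: "real (Suc (b ^ m - 1)) = real b ^ m"
    using base_ge_2 by simp
  show "0 \<le> digit_tail b a l \<and> digit_tail b a l < 1" for l
    using digit_tail_nonneg tails by blast
  show "inj_on (\<lambda>l. nat \<lfloor>real (Suc (b ^ m - 1)) * digit_tail b a l\<rfloor>) {1..b ^ m - 1}"
  proof (rule inj_onI)
    fix l l'
    assume l: "l \<in> {1..b ^ m - 1}" and l': "l' \<in> {1..b ^ m - 1}"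
      and "nat \<lfloor>real (Suc (b ^ m - 1)) * digit_tail b a l\<rfloor>
         = nat \<lfloor>real (Suc (b ^ m - 1)) * digit_tail b a l'\<rfloor>"
    then have floors: "\<lfloor>real b ^ m * digit_tail b a l\<rfloor> = \<lfloor>real b ^ m * digit_tail b a l'\<rfloor>"
      using digit_tail_nonneg unfolding bm by (simp add: eq_nat_nat_iff)
    have "map (\<lambda>j. a (l + Suc j)) [0..<m] = map (\<lambda>j. a (l' + Suc j)) [0..<m]"
      using floor_power_digit_tail_digit[OF tails, of _ m l]
        floor_power_digit_tail_digit[OF tails, of _ m l'] floors
      by (simp add: map_eq_conv)
    moreover have "l \<in> {..<b ^ m}" "l' \<in> {..<b ^ m}"
      using l l' by auto
    ultimately show "l = l'"
      using debruijn_prefix_factor_inj[OF db digit_less] by (auto dest: inj_onD)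
  qed
qed

lemma not_poissonian_if_frequently_cell_separated:
  assumes "\<exists>\<^sub>F N in sequentially. cell_separated x N"
  shows "\<not> poissonian_pair_correlations x"
proof
  assume "poissonian_pair_correlations x"
  then have "(\<lambda>N. pair_corr x N s) \<longlonglongrightarrow> 2 * s" if "s \<ge> 0" for s
    using that by (simp add: poissonian_pair_correlations_def)
  from this[of "1/2"] this[of "7/8"]
  have lim: "(\<lambda>N. pair_corr x N (1/2)) \<longlonglongrightarrow> 1" "(\<lambda>N. pair_corr x N (7/8)) \<longlonglongrightarrow> 7/4"
    by simp_all
  have "\<forall>\<^sub>F N in sequentially. 9/10 < pair_corr x N (1/2)"
    by (rule order_tendstoD(1)[OF lim(1)]) simp
  moreover have "\<forall>\<^sub>F N in sequentially. 17/10 < pair_corr x N (7/8)"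
    by (rule order_tendstoD(1)[OF lim(2)]) simp
  ultimately have "\<forall>\<^sub>F N in sequentially. N \<ge> 28 \<and> 9/10 < pair_corr x N (1/2) \<and> 17/10 < pair_corr x N (7/8)"
    by (intro eventually_conj eventually_ge_at_top)
  with assms have "\<exists>\<^sub>F N in sequentially. (N \<ge> 28 \<and> 9/10 < pair_corr x N (1/2)
      \<and> 17/10 < pair_corr x N (7/8)) \<and> cell_separated x N"
    by (rule frequently_eventually_conj)
  then obtain N where "cell_separated x N" "N \<ge> 28"
    and "9/10 < pair_corr x N (1/2)" "17/10 < pair_corr x N (7/8)"
    using frequently_ex by blast
  then show False
    using cell_separated.pair_corr_not_both_large by force
qed

lemma (in base_digits) infinite_debruijn_tail_less_one:
  assumes "infinite_debruijn b a"
  shows "digit_tail b a l < 1"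
proof -
  obtain k where "a (l + Suc k) = 0"
    using debruijn_prefix_zero_digit[OF infinite_debruijn_odd[OF assms], of "2 * l + 1" l] base_ge_2
    by auto
  then show ?thesis
    using base_ge_2 by (intro digit_tail_less_one[of l k]) auto
qed

lemma (in base_digits) infinite_debruijn_frequently_cell_separated:
  assumes "infinite_debruijn b a"
  shows "\<exists>\<^sub>F N in sequentially. cell_separated (digit_tail b a) N"
  unfolding frequently_sequentially
proof
  fix N0
  have "N0 < 2 ^ (2 * N0 + 1)"
    using less_exp[of "2 * N0 + 1"] by simp
  also have "\<dots> \<le> b ^ (2 * N0 + 1)"
    using base_ge_2 by (rule power_mono) simp
  finally have "N0 \<le> b ^ (2 * N0 + 1) - 1"
    by simp
  moreover have "cell_separated (digit_tail b a) (b ^ (2 * N0 + 1) - 1)"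
    using infinite_debruijn_tail_less_one[OF assms] infinite_debruijn_odd[OF assms]
    by (intro debruijn_tails_cell_separated) auto
  ultimately show "\<exists>N\<ge>N0. cell_separated (digit_tail b a) N"
    by blast
qed

theorem theorem2:
  fixes b :: nat and a :: "nat \<Rightarrow> nat"
  assumes "b \<ge> 2"
    and "infinite_debruijn b a"
  shows "\<not> poissonian_pair_correlations
           (\<lambda>n. frac (real b ^ n * (\<Sum>k. real (a (Suc k)) / real b ^ Suc k)))"
proof -
  interpret base_digits b a
    using assms by unfold_locales (auto simp: infinite_debruijn_def)
  have "digit_tail b a 0 = (\<Sum>k. real (a (Suc k)) / real b ^ Suc k)"
    by (simp add: digit_tail_def)
  then have "(\<lambda>n. frac (real b ^ n * (\<Sum>k. real (a (Suc k)) / real b ^ Suc k))) = digit_tail b a"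
    using frac_power_digit_tail[OF infinite_debruijn_tail_less_one[OF assms(2)]] by auto
  then show ?thesis
    using not_poissonian_if_frequently_cell_separated
      infinite_debruijn_frequently_cell_separated[OF assms(2)] by simp
qed

end
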